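(* Let $(\mathcal{X},\mathcal{B},\lambda)$ be a measure space with $\lambda$ positive and $\sigma$-finite, $P$ a probability measure with density $f\in\mathcal{L}^2(\mathcal{X},\lambda)$ with respect to $\lambda$, and $X_1,\dots,X_N$ i.i.d. with law $P$. Let $f_1,\dots,f_m\in\mathcal{L}^2$ with $D_k=\int f_k^2d\lambda>0$, and assume there are known constants $C_k>0$ with $|f_k(x)|\le\sqrt{C_kD_k}$ for all $x$ and all $k$. Let $a>1$, $\varepsilon>0$ and $k\in\{1,\dots,m\}$, and let $$B=\left\{a^l:\ 0\le l\le\left\lfloor\frac{\log\frac{N}{\sqrt{C_kD_k}}}{\log a}\right\rfloor-1\right\}.$$ Then with $P^{\otimes N}$-probability at least $1-\varepsilon$, $$\sup_{\beta\in B}\alpha^{\inf}_k\left(\frac{\varepsilon\log a}{\log N-\frac12\log C_kD_k},\beta\right)\le\overline{\alpha}_k\le\inf_{\beta\in B}\alpha^{\sup}_k\left(\frac{\varepsilon\log a}{\log N-\frac12\log C_kD_k},\beta\right).$$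
   Context: $\overline{\alpha}_k=\frac{\int f_kf\,d\lambda}{D_k}$. For $\eta>0$ and $\beta>0$: $$\alpha^{\sup}_k(\eta,\beta)=\frac{N-N\exp\left[\frac1N\sum_{i=1}^N\log\left(1-\frac{\beta}{N}f_k(X_i)\right)-\frac{\log\frac{2m}{\eta}}{N}\right]}{D_k\beta},\quad \alpha^{\inf}_k(\eta,\beta)=\frac{N\exp\left[\frac1N\sum_{i=1}^N\log\left(1+\frac{\beta}{N}f_k(X_i)\right)-\frac{\log\frac{2m}{\eta}}{N}\right]-N}{D_k\beta}.$$ Conventions: $\sup\emptyset=-\infty$, $\inf\emptyset=+\infty$. *)

theory Defs
  imports "HOL-Probability.Probability"
begin

definition alpha_sup ::
  "nat \<Rightarrow> nat \<Rightarrow> real \<Rightarrow> ('a \<Rightarrow> real) \<Rightarrow> (nat \<Rightarrow> 'a) \<Rightarrow> real \<Rightarrow> real \<Rightarrow> real" where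
  "alpha_sup N m Dk fkk X eta beta =
     (real N - real N * exp ((\<Sum>i<N. ln (1 - beta / real N * fkk (X i))) / real N
        - ln (2 * real m / eta) / real N)) / (Dk * beta)"

definition alpha_inf ::
  "nat \<Rightarrow> nat \<Rightarrow> real \<Rightarrow> ('a \<Rightarrow> real) \<Rightarrow> (nat \<Rightarrow> 'a) \<Rightarrow> real \<Rightarrow> real \<Rightarrow> real" where
  "alpha_inf N m Dk fkk X eta beta =
     (real N * exp ((\<Sum>i<N. ln (1 + beta / real N * fkk (X i))) / real N
        - ln (2 * real m / eta) / real N) - real N) / (Dk * beta)"

end

theory Submission
  imports Defs
begin

(* Since beta sqrt(C_k D_k) < N, the factors 1 + (beta/N) f_k(X_i) are
   positive and, by independence, their product has expectation (1 + (beta/N) D_k alphabar_k)^N.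
   Markov's inequality therefore bounds by eta/(2m) the probability that their geometric mean
   exceeds (2m/eta)^(1/N) (1 + (beta/N) D_k alphabar_k), which is precisely the event
   alphabar_k < alpha_inf_k(eta, beta); replacing f_k by -f_k turns alpha_inf into -alpha_sup and
   handles the other side. The grid has at most log_a(N / sqrt(C_k D_k)) points and eta is
   epsilon divided by that number, so a union bound over the grid leaves a failure probability
   of at most epsilon/m. *)

lemma (in prob_space) integral_pos_of_pos:
  fixes g :: "'a \<Rightarrow> real"
  assumes g: "integrable M g" and pos: "\<And>x. x \<in> space M \<Longrightarrow> 0 < g x"
  shows "0 < integral\<^sup>L M g"
proof -
  have nonneg: "AE x in M. 0 \<le> g x"
    using pos by (auto intro!: AE_I2 less_imp_le)
  have "\<not> (AE x in M. g x = 0)"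
  proof
    assume "AE x in M. g x = 0"
    then have "AE x in M. False"
      by (rule AE_mp) (auto intro!: AE_I2 dest: pos)
    then show False by simp
  qed
  then show ?thesis
    using integral_nonneg_eq_0_iff_AE[OF g nonneg] integral_nonneg_AE[OF nonneg] by linarith
qed

lemma (in prob_space) prob_all_ge_one_minus_sum:
  assumes "finite B" and "\<And>\<beta>. \<beta> \<in> B \<Longrightarrow> {x \<in> space M. \<not> Q \<beta> x} \<in> events"
  shows "1 - (\<Sum>\<beta>\<in>B. prob {x \<in> space M. \<not> Q \<beta> x}) \<le> prob {x \<in> space M. \<forall>\<beta>\<in>B. Q \<beta> x}"
proof -
  let ?U = "\<Union>\<beta>\<in>B. {x \<in> space M. \<not> Q \<beta> x}"
  have U: "?U \<in> events"
    using assms by (intro sets.finite_UN) auto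
  have "1 - (\<Sum>\<beta>\<in>B. prob {x \<in> space M. \<not> Q \<beta> x}) \<le> 1 - prob ?U"
    using assms by (intro diff_left_mono finite_measure_subadditive_finite) auto
  also have "\<dots> = prob (space M - ?U)"
    using prob_compl[OF U] ..
  also have "space M - ?U = {x \<in> space M. \<forall>\<beta>\<in>B. Q \<beta> x}"
    by auto
  finally show ?thesis .
qed

lemma iid_product_Markov_inequality:
  fixes g :: "'a \<Rightarrow> real" and I :: "'i set"
  assumes P: "prob_space P" and I: "finite I" and g: "integrable P g"
    and nonneg: "\<And>x. x \<in> space P \<Longrightarrow> 0 \<le> g x"
    and c: "0 < c" and mean: "0 < integral\<^sup>L P g"
  shows "measure (PiM I (\<lambda>_. P))
           {X \<in> space (PiM I (\<lambda>_. P)). c * integral\<^sup>L P g ^ card I \<le> (\<Prod>i\<in>I. g (X i))}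
         \<le> 1 / c"
proof -
  let ?Q = "PiM I (\<lambda>_. P)"
  interpret product_prob_space "\<lambda>_. P" I
    by (rule product_prob_spaceI) (rule P)
  have "measure ?Q {X \<in> space ?Q. c * integral\<^sup>L P g ^ card I \<le> (\<Prod>i\<in>I. g (X i))}
      \<le> (\<integral>X. (\<Prod>i\<in>I. g (X i)) \<partial>?Q) / (c * integral\<^sup>L P g ^ card I)"
  proof (rule integral_Markov_inequality_measure[where A = "space ?Q"])
    show "integrable ?Q (\<lambda>X. \<Prod>i\<in>I. g (X i))"
      using product_integrable_prod[OF I, of "\<lambda>_. g"] g by simp
    show "AE X in ?Q. 0 \<le> (\<Prod>i\<in>I. g (X i))"
      by (rule AE_I2) (auto simp: space_PiM intro!: prod_nonneg nonneg)
  qed (use c mean in simp_all)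
  also have "\<dots> = 1 / c"
    using product_integral_prod[OF I, of "\<lambda>_. g"] g mean by simp
  finally show ?thesis .
qed

lemma geometric_mean_large_deviation:
  fixes g :: "'a \<Rightarrow> real"
  assumes P: "prob_space P" and g: "integrable P g"
    and pos: "\<And>x. x \<in> space P \<Longrightarrow> 0 < g x" and K: "0 < K" and N: "0 < N"
  shows "measure (PiM {0..<N} (\<lambda>_. P))
           {X \<in> space (PiM {0..<N} (\<lambda>_. P)).
              integral\<^sup>L P g < exp ((\<Sum>i<N. ln (g (X i))) / real N - ln K / real N)}
         \<le> 1 / K"
proof -
  let ?Q = "PiM {0..<N} (\<lambda>_. P)"
  let ?E = "integral\<^sup>L P g"
  interpret Q: prob_space ?Q
    using P by (auto intro: prob_space_PiM)
  have E: "0 < ?E"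
    using prob_space.integral_pos_of_pos[OF P g pos] .
  have [measurable]: "g \<in> borel_measurable P"
    using g by simp
  have "K * ?E ^ N \<le> (\<Prod>i\<in>{0..<N}. g (X i))"
    if X: "X \<in> space ?Q" and lt: "?E < exp ((\<Sum>i<N. ln (g (X i))) / real N - ln K / real N)" for X
  proof -
    have "ln ?E < ((\<Sum>i<N. ln (g (X i))) - ln K) / real N"
      using lt E by (metis diff_divide_distrib exp_gt_zero ln_exp ln_less_cancel_iff)
    then have "real N * ln ?E + ln K < (\<Sum>i<N. ln (g (X i)))"
      using N by (simp add: field_simps)
    then have "exp (real N * ln ?E + ln K) < exp (\<Sum>i<N. ln (g (X i)))"
      by simp
    moreover have "exp (real N * ln ?E + ln K) = K * ?E ^ N"
      using E K by (simp add: exp_add exp_of_nat_mult)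
    moreover have "exp (\<Sum>i<N. ln (g (X i))) = (\<Prod>i\<in>{0..<N}. g (X i))"
      using X pos by (simp add: exp_sum atLeast0LessThan space_PiM PiE_def Pi_def)
    ultimately show ?thesis by simp
  qed
  then have "measure ?Q {X \<in> space ?Q. ?E < exp ((\<Sum>i<N. ln (g (X i))) / real N - ln K / real N)}
      \<le> measure ?Q {X \<in> space ?Q. K * ?E ^ card {0..<N} \<le> (\<Prod>i\<in>{0..<N}. g (X i))}"
    by (intro Q.finite_measure_mono) auto
  also have "\<dots> \<le> 1 / K"
    using iid_product_Markov_inequality[where I = "{0..<N}", OF P _ g _ K E] pos by (simp add: less_imp_le)
  finally show ?thesis .
qed

lemma alpha_sup_eq_uminus_alpha_inf:
  "alpha_sup N m D h X \<eta> \<beta> = - alpha_inf N m D (\<lambda>x. - h x) X \<eta> \<beta>"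
  unfolding alpha_sup_def alpha_inf_def minus_divide_left minus_diff_eq by simp

lemma less_alpha_inf_iff:
  assumes "0 < D" and "0 < \<beta>" and "0 < N"
  shows "c / D < alpha_inf N m D h X \<eta> \<beta> \<longleftrightarrow>
    1 + \<beta> / real N * c
      < exp ((\<Sum>i<N. ln (1 + \<beta> / real N * h (X i))) / real N - ln (2 * real m / \<eta>) / real N)"
  using assms unfolding alpha_inf_def by (simp add: field_simps)

lemma prob_mean_less_alpha_inf:
  fixes h :: "'a \<Rightarrow> real"
  assumes P: "prob_space P" and h: "integrable P h"
    and small: "\<And>x. x \<in> space P \<Longrightarrow> \<bar>\<beta> / real N * h x\<bar> < 1"
    and D: "0 < D" and \<beta>: "0 < \<beta>" and N: "0 < N" and \<eta>: "0 < \<eta>" and m: "0 < m"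
  shows "measure (PiM {0..<N} (\<lambda>_. P))
           {X \<in> space (PiM {0..<N} (\<lambda>_. P)). integral\<^sup>L P h / D < alpha_inf N m D h X \<eta> \<beta>}
         \<le> \<eta> / (2 * real m)"
proof -
  let ?g = "\<lambda>x. 1 + \<beta> / real N * h x"
  interpret prob_space P by (rule P)
  have mean: "integral\<^sup>L P ?g = 1 + \<beta> / real N * integral\<^sup>L P h"
    using h by (simp add: prob_space)
  have "{X \<in> space (PiM {0..<N} (\<lambda>_. P)). integral\<^sup>L P h / D < alpha_inf N m D h X \<eta> \<beta>}
      = {X \<in> space (PiM {0..<N} (\<lambda>_. P)).
           integral\<^sup>L P ?g < exp ((\<Sum>i<N. ln (?g (X i))) / real N - ln (2 * real m / \<eta>) / real N)}"
    unfolding less_alpha_inf_iff[OF D \<beta> N] mean ..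
  also have "measure (PiM {0..<N} (\<lambda>_. P)) \<dots> \<le> 1 / (2 * real m / \<eta>)"
  proof (rule geometric_mean_large_deviation[OF P _ _ _ N])
    show "integrable P ?g" using h by simp
    show "0 < ?g x" if "x \<in> space P" for x
      using small[OF that] by linarith
  qed (use \<eta> m in simp)
  finally show ?thesis by simp
qed

lemma prob_alpha_sup_less_mean:
  fixes h :: "'a \<Rightarrow> real"
  assumes P: "prob_space P" and h: "integrable P h"
    and small: "\<And>x. x \<in> space P \<Longrightarrow> \<bar>\<beta> / real N * h x\<bar> < 1"
    and "0 < D" and "0 < \<beta>" and "0 < N" and "0 < \<eta>" and "0 < m"
  shows "measure (PiM {0..<N} (\<lambda>_. P))
           {X \<in> space (PiM {0..<N} (\<lambda>_. P)). alpha_sup N m D h X \<eta> \<beta> < integral\<^sup>L P h / D}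
         \<le> \<eta> / (2 * real m)"
proof -
  have "alpha_sup N m D h X \<eta> \<beta> < integral\<^sup>L P h / D \<longleftrightarrow>
      integral\<^sup>L P (\<lambda>x. - h x) / D < alpha_inf N m D (\<lambda>x. - h x) X \<eta> \<beta>" for X
    by (auto simp add: alpha_sup_eq_uminus_alpha_inf minus_less_iff)
  moreover have "measure (PiM {0..<N} (\<lambda>_. P))
      {X \<in> space (PiM {0..<N} (\<lambda>_. P)).
         integral\<^sup>L P (\<lambda>x. - h x) / D < alpha_inf N m D (\<lambda>x. - h x) X \<eta> \<beta>}
      \<le> \<eta> / (2 * real m)"
    using small by (intro prob_mean_less_alpha_inf[OF P]) (use h assms in auto)
  ultimately show ?thesis by simp
qed

lemma borel_measurable_alpha_inf [measurable]:
  assumes [measurable]: "h \<in> borel_measurable P"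
  shows "(\<lambda>X. alpha_inf N m D h X \<eta> \<beta>) \<in> borel_measurable (PiM {0..<N} (\<lambda>_. P))"
  unfolding alpha_inf_def by measurable

lemma borel_measurable_alpha_sup [measurable]:
  assumes [measurable]: "h \<in> borel_measurable P"
  shows "(\<lambda>X. alpha_sup N m D h X \<eta> \<beta>) \<in> borel_measurable (PiM {0..<N} (\<lambda>_. P))"
  unfolding alpha_sup_def by measurable

lemma prob_mean_outside_alpha_interval:
  fixes h :: "'a \<Rightarrow> real"
  assumes P: "prob_space P" and h: "integrable P h"
    and small: "\<And>x. x \<in> space P \<Longrightarrow> \<bar>\<beta> / real N * h x\<bar> < 1"
    and "0 < D" and "0 < \<beta>" and "0 < N" and "0 < \<eta>" and "0 < m"
  shows "measure (PiM {0..<N} (\<lambda>_. P))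
           {X \<in> space (PiM {0..<N} (\<lambda>_. P)).
              \<not> (alpha_inf N m D h X \<eta> \<beta> \<le> integral\<^sup>L P h / D
                 \<and> integral\<^sup>L P h / D \<le> alpha_sup N m D h X \<eta> \<beta>)}
         \<le> \<eta> / real m"
proof -
  let ?Q = "PiM {0..<N} (\<lambda>_. P)"
  have [measurable]: "h \<in> borel_measurable P"
    using h by simp
  have "{X \<in> space ?Q. \<not> (alpha_inf N m D h X \<eta> \<beta> \<le> integral\<^sup>L P h / D
                 \<and> integral\<^sup>L P h / D \<le> alpha_sup N m D h X \<eta> \<beta>)}
      = {X \<in> space ?Q. integral\<^sup>L P h / D < alpha_inf N m D h X \<eta> \<beta>}
        \<union> {X \<in> space ?Q. alpha_sup N m D h X \<eta> \<beta> < integral\<^sup>L P h / D}"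
    by auto
  then have "measure ?Q {X \<in> space ?Q. \<not> (alpha_inf N m D h X \<eta> \<beta> \<le> integral\<^sup>L P h / D
                 \<and> integral\<^sup>L P h / D \<le> alpha_sup N m D h X \<eta> \<beta>)}
      \<le> measure ?Q {X \<in> space ?Q. integral\<^sup>L P h / D < alpha_inf N m D h X \<eta> \<beta>}
        + measure ?Q {X \<in> space ?Q. alpha_sup N m D h X \<eta> \<beta> < integral\<^sup>L P h / D}"
    by (simp only:) (rule measure_Un_le; measurable)
  also have "\<dots> \<le> \<eta> / (2 * real m) + \<eta> / (2 * real m)"
    using prob_mean_less_alpha_inf[OF assms] prob_alpha_sup_less_mean[OF assms] by (rule add_mono)
  finally show ?thesis by simp
qed

definition geometric_grid :: "real \<Rightarrow> real \<Rightarrow> real set" where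
  "geometric_grid a x = {a ^ l | l::nat. int l \<le> \<lfloor>ln x / ln a\<rfloor> - 1}"

lemma geometric_grid_eq_image:
  "geometric_grid a x = (\<lambda>l. a ^ l) ` {..<nat \<lfloor>ln x / ln a\<rfloor>}"
  unfolding geometric_grid_def by auto

lemma finite_geometric_grid: "finite (geometric_grid a x)"
  unfolding geometric_grid_eq_image by simp

lemma geometric_grid_memD:
  assumes a: "1 < a" and x: "0 < x" and \<beta>: "\<beta> \<in> geometric_grid a x"
  shows "1 \<le> \<beta>" and "a * \<beta> \<le> x"
proof -
  obtain l where l: "\<beta> = a ^ l" and "int l + 1 \<le> \<lfloor>ln x / ln a\<rfloor>"
    using \<beta> unfolding geometric_grid_def by auto
  then have "real (Suc l) \<le> ln x / ln a"
    by linarith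
  then have "real (Suc l) * ln a \<le> ln x"
    using a by (simp add: pos_le_divide_eq)
  moreover have "ln (a ^ Suc l) = real (Suc l) * ln a"
    using a by (intro ln_realpow)
  ultimately have "ln (a ^ Suc l) \<le> ln x"
    by simp
  then show "a * \<beta> \<le> x"
    using a x l by simp
  show "1 \<le> \<beta>"
    using a l by simp
qed

lemma card_geometric_grid_mult_bounds:
  assumes a: "1 < a" and \<epsilon>: "0 \<le> \<epsilon>"
  shows "real (card (geometric_grid a x)) * (\<epsilon> * ln a / ln x) \<in> {0..\<epsilon>}"
proof -
  let ?t = "ln x / ln a"
  have card: "card (geometric_grid a x) \<le> nat \<lfloor>?t\<rfloor>"
    unfolding geometric_grid_eq_image using card_image_le[of "{..<nat \<lfloor>?t\<rfloor>}"] by simp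
  show ?thesis
  proof (cases "\<lfloor>?t\<rfloor> \<le> 0")
    case True
    then show ?thesis using card \<epsilon> by simp
  next
    case False
    then have "1 \<le> ?t" and card_le: "real (card (geometric_grid a x)) \<le> ?t"
      using card by linarith+
    moreover have ln_a: "0 < ln a"
      using a by simp
    ultimately have ln_x: "0 < ln x"
      by (simp add: le_divide_eq)
    have "real (card (geometric_grid a x)) * (\<epsilon> * ln a / ln x) \<le> ?t * (\<epsilon> * ln a / ln x)"
      using card_le \<epsilon> ln_a ln_x by (intro mult_right_mono) auto
    also have "\<dots> = \<epsilon>"
      using ln_a ln_x by simp
    finally show ?thesis
      using \<epsilon> ln_a ln_x by simp
  qed
qed

lemma prob_mean_outside_alpha_interval_geometric_grid:
  fixes h :: "'a \<Rightarrow> real"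
  assumes P: "prob_space P" and h [measurable]: "h \<in> borel_measurable P"
    and bounded: "\<And>x. x \<in> space P \<Longrightarrow> \<bar>h x\<bar> \<le> s" and s: "0 < s"
    and a: "1 < a" and \<epsilon>: "0 < \<epsilon>" and D: "0 < D" and N: "0 < N" and m: "0 < m"
    and \<beta>: "\<beta> \<in> geometric_grid a (real N / s)"
  defines "\<eta> \<equiv> \<epsilon> * ln a / ln (real N / s)"
  shows "measure (PiM {0..<N} (\<lambda>_. P))
           {X \<in> space (PiM {0..<N} (\<lambda>_. P)).
              \<not> (alpha_inf N m D h X \<eta> \<beta> \<le> integral\<^sup>L P h / D
                 \<and> integral\<^sup>L P h / D \<le> alpha_sup N m D h X \<eta> \<beta>)}
         \<le> \<eta> / real m"
proof (rule prob_mean_outside_alpha_interval[OF P])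
  have x: "0 < real N / s"
    using N s by simp
  have \<beta>_ge_1: "1 \<le> \<beta>" and a\<beta>: "a * \<beta> \<le> real N / s"
    using geometric_grid_memD[OF a x \<beta>] by auto
  show "integrable P h"
    using bounded by (intro finite_measure.integrable_const_bound[OF prob_space.finite_measure[OF P]] AE_I2) auto
  have "\<beta> * s < a * \<beta> * s"
    using a \<beta>_ge_1 s by simp
  also have "\<dots> \<le> real N"
    using a\<beta> s by (simp add: pos_le_divide_eq)
  finally have \<beta>_s: "\<beta> * s < real N" .
  show "\<bar>\<beta> / real N * h x\<bar> < 1" if "x \<in> space P" for x
  proof -
    have "\<bar>\<beta> / real N * h x\<bar> \<le> \<beta> / real N * s"
      using bounded[OF that] \<beta>_ge_1 by (simp add: abs_mult) (intro divide_right_mono mult_left_mono; simp)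
    also have "\<dots> < 1"
      using \<beta>_s N by (simp add: field_simps)
    finally show ?thesis .
  qed
  have "a \<le> a * \<beta>"
    using a \<beta>_ge_1 by simp
  then have "1 < real N / s"
    using a a\<beta> by linarith
  then show "0 < \<eta>"
    unfolding \<eta>_def using a \<epsilon> by simp
  show "0 < \<beta>"
    using \<beta>_ge_1 by simp
qed (use D N m in auto)

lemma prob_mean_in_alpha_intervals_geometric_grid:
  fixes h :: "'a \<Rightarrow> real"
  assumes P: "prob_space P" and h [measurable]: "h \<in> borel_measurable P"
    and bounded: "\<And>x. x \<in> space P \<Longrightarrow> \<bar>h x\<bar> \<le> s" and s: "0 < s"
    and a: "1 < a" and \<epsilon>: "0 < \<epsilon>" and D: "0 < D" and N: "0 < N" and m: "0 < m"
  defines "\<eta> \<equiv> \<epsilon> * ln a / ln (real N / s)" and "G \<equiv> geometric_grid a (real N / s)"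
  shows "1 - \<epsilon> \<le> measure (PiM {0..<N} (\<lambda>_. P))
           {X \<in> space (PiM {0..<N} (\<lambda>_. P)). \<forall>\<beta>\<in>G.
              alpha_inf N m D h X \<eta> \<beta> \<le> integral\<^sup>L P h / D
              \<and> integral\<^sup>L P h / D \<le> alpha_sup N m D h X \<eta> \<beta>}"
proof -
  let ?Q = "PiM {0..<N} (\<lambda>_. P)"
  define good where "good \<beta> X \<longleftrightarrow>
    alpha_inf N m D h X \<eta> \<beta> \<le> integral\<^sup>L P h / D \<and> integral\<^sup>L P h / D \<le> alpha_sup N m D h X \<eta> \<beta>"
    for \<beta> X
  have "real (card G) * \<eta> \<in> {0..\<epsilon>}"
    unfolding \<eta>_def G_def using card_geometric_grid_mult_bounds a \<epsilon> by simp
  then have "real (card G) * \<eta> / real m \<le> \<epsilon>"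
    using frac_le[of "real (card G) * \<eta>" "real (card G) * \<eta>" 1 "real m"] m by simp
  then have "1 - \<epsilon> \<le> 1 - (\<Sum>\<beta>\<in>G. \<eta> / real m)"
    by simp
  also have "\<dots> \<le> 1 - (\<Sum>\<beta>\<in>G. measure ?Q {X \<in> space ?Q. \<not> good \<beta> X})"
    unfolding good_def \<eta>_def G_def
    using prob_mean_outside_alpha_interval_geometric_grid[OF P h bounded s a \<epsilon> D N m]
    by (intro diff_left_mono sum_mono) auto
  also have "\<dots> \<le> measure ?Q {X \<in> space ?Q. \<forall>\<beta>\<in>G. good \<beta> X}"
    unfolding G_def good_def
    by (rule prob_space.prob_all_ge_one_minus_sum[OF prob_space_PiM[OF P] finite_geometric_grid]) measurable
  finally show ?thesis
    unfolding good_def .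
qed

theorem corollary6:
  fixes M :: "'a measure" and f :: "'a \<Rightarrow> real"
    and fk :: "nat \<Rightarrow> 'a \<Rightarrow> real" and C :: "nat \<Rightarrow> real"
    and N m k :: nat and a \<epsilon> :: real
  defines "D \<equiv> (\<lambda>j. integral\<^sup>L M (\<lambda>x. (fk j x)\<^sup>2))"
  defines "P \<equiv> density M (\<lambda>x. ennreal (f x))"
  defines "B \<equiv> {a ^ l | l::nat. int l \<le> \<lfloor>ln (real N / sqrt (C k * D k)) / ln a\<rfloor> - 1}"
  defines "\<eta> \<equiv> \<epsilon> * ln a / (ln (real N) - ln (C k * D k) / 2)"
  assumes "sigma_finite_measure M"
    and f_meas: "f \<in> borel_measurable M"
    and f_nonneg: "\<And>x. x \<in> space M \<Longrightarrow> 0 \<le> f x"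
    and f_int1: "(\<integral>\<^sup>+ x. ennreal (f x) \<partial>M) = 1"
    and f_L2: "integrable M (\<lambda>x. (f x)\<^sup>2)"
    and N_pos: "0 < N"
    and fk_meas: "\<And>j. j \<in> {1..m} \<Longrightarrow> fk j \<in> borel_measurable M"
    and fk_L2: "\<And>j. j \<in> {1..m} \<Longrightarrow> integrable M (\<lambda>x. (fk j x)\<^sup>2)"
    and D_pos: "\<And>j. j \<in> {1..m} \<Longrightarrow> 0 < D j"
    and C_pos: "\<And>j. j \<in> {1..m} \<Longrightarrow> 0 < C j"
    and fk_bound: "\<And>j x. j \<in> {1..m} \<Longrightarrow> x \<in> space M \<Longrightarrow> \<bar>fk j x\<bar> \<le> sqrt (C j * D j)"
    and a_gt1: "1 < a"
    and eps_pos: "0 < \<epsilon>"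
    and k_in: "k \<in> {1..m}"
  shows "measure (PiM {0..<N} (\<lambda>_. P))
           {X \<in> space (PiM {0..<N} (\<lambda>_. P)).
              (SUP \<beta>\<in>B. ereal (alpha_inf N m (D k) (fk k) X \<eta> \<beta>))
                \<le> ereal (integral\<^sup>L M (\<lambda>x. fk k x * f x) / D k)
              \<and> ereal (integral\<^sup>L M (\<lambda>x. fk k x * f x) / D k)
                \<le> (INF \<beta>\<in>B. ereal (alpha_sup N m (D k) (fk k) X \<eta> \<beta>))}
         \<ge> 1 - \<epsilon>"
proof -
  let ?s = "sqrt (C k * D k)"
  let ?\<alpha> = "integral\<^sup>L M (\<lambda>x. fk k x * f x) / D k"
  have CD: "0 < C k * D k" and Dk: "0 < D k" and m: "0 < m"
    using C_pos D_pos k_in by auto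
  have "ln (real N / ?s) = ln (real N) - ln (C k * D k) / 2"
    using CD N_pos by (simp only: ln_divide_pos ln_sqrt real_sqrt_gt_zero of_nat_0_less_iff less_imp_le)
  then have \<eta>_eq: "\<eta> = \<epsilon> * ln a / ln (real N / ?s)"
    unfolding \<eta>_def by simp
  have B_eq: "B = geometric_grid a (real N / ?s)"
    unfolding B_def geometric_grid_def ..
  have P: "prob_space P"
    unfolding P_def using f_meas f_int1 by (intro prob_spaceI) (simp add: emeasure_density)
  have fk_P: "fk k \<in> borel_measurable P"
    unfolding P_def using fk_meas k_in by simp
  have fk_bounded: "\<bar>fk k x\<bar> \<le> ?s" if "x \<in> space P" for x
    using fk_bound k_in that unfolding P_def by simp
  have mean: "integral\<^sup>L P (fk k) / D k = ?\<alpha>"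
    unfolding P_def using f_meas f_nonneg fk_meas k_in
    by (subst integral_density) (auto simp: mult.commute)
  have "1 - \<epsilon> \<le> measure (PiM {0..<N} (\<lambda>_. P)) {X \<in> space (PiM {0..<N} (\<lambda>_. P)).
      \<forall>\<beta>\<in>B. alpha_inf N m (D k) (fk k) X \<eta> \<beta> \<le> ?\<alpha> \<and> ?\<alpha> \<le> alpha_sup N m (D k) (fk k) X \<eta> \<beta>}"
    using prob_mean_in_alpha_intervals_geometric_grid[OF P fk_P fk_bounded _ a_gt1 eps_pos Dk N_pos m] CD
    unfolding mean \<eta>_eq B_eq by simp
  then show ?thesis
    by (simp add: SUP_le_iff le_INF_iff ball_conj_distrib)
qed

end
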